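(* Let $x,y$ be non-commuting indeterminates and $C=xyx^{-1}y^{-1}$. Let $(R_n)_{n\in\mathbb Z}$ satisfy $$R_{2n}CR_{2n-2}=1+R_{2n-1},\qquad R_{2n+1}CR_{2n-1}=1+R_{2n}^4\qquad(n\in\mathbb Z),$$ with $R_0=yxy^{-1}$ and $R_1=y$, and set $u_n=R_{2n}$, so that $u_0=yxy^{-1}$. Define $$y_1=(1+y)x^{-1}yx^{-1}y^{-1},$$ $$y_2=\big(x^2+(1+y)x^{-2}(1+y)\big)y^{-1}x^{-1}yx^{-1}y^{-1},$$ $$y_3=\big(x^3+(1+y)x^{-1}\big)x^{-1}y^{-1}.$$ Then, as formal power series in a central variable $t$, $$\sum_{n\ge0}t^nu_n=\Big(1-ty_1-t^2(1-ty_3)^{-1}y_2\Big)^{-1}u_0.$$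
   Context: Work in the free skew field (non-commutative rational functions) over $\mathbb C$ generated by $x,y$. The variable $t$ is a formal variable commuting with everything, and inverses of $1-(\text{terms of positive }t\text{-degree})$ are expanded as geometric series. *)

theory Defs
  imports Complex_Main "HOL-Computational_Algebra.Formal_Power_Series"
begin

text \<open>Free associative algebra C<x,y>: words over {x,y} are bool lists
  (False = x, True = y); an element is a finitely supported coefficient function.\<close>

type_synonym fa = "bool list \<Rightarrow> complex"

definition fa_poly :: "fa \<Rightarrow> bool" where
  "fa_poly p \<longleftrightarrow> finite {w. p w \<noteq> 0}"

definition fa_mult :: "fa \<Rightarrow> fa \<Rightarrow> fa" where
  "fa_mult p q = (\<lambda>w. \<Sum>k\<le>length w. p (take k w) * q (drop k w))"

definition word_eval :: "'a::ring_1 \<Rightarrow> 'a \<Rightarrow> bool list \<Rightarrow> 'a" where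
  "word_eval a b w = foldr (\<lambda>c r. (if c then b else a) * r) w 1"

definition fa_eval :: "(complex \<Rightarrow> 'a::ring_1) \<Rightarrow> 'a \<Rightarrow> 'a \<Rightarrow> fa \<Rightarrow> 'a" where
  "fa_eval \<phi> a b p = (\<Sum>w\<in>{w. p w \<noteq> 0}. \<phi> (p w) * word_eval a b w)"

definition fa_full :: "nat \<Rightarrow> (nat \<Rightarrow> nat \<Rightarrow> fa) \<Rightarrow> bool" where
  "fa_full n M \<longleftrightarrow> \<not> (\<exists>r<n. \<exists>P Q.
      (\<forall>i j. fa_poly (P i j)) \<and> (\<forall>i j. fa_poly (Q i j)) \<and>
      (\<forall>i<n. \<forall>j<n. (\<forall>w. M i j w = (\<Sum>k<r. fa_mult (P i k) (Q k j) w))))"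

definition mat_invertible :: "nat \<Rightarrow> (nat \<Rightarrow> nat \<Rightarrow> 'a::ring_1) \<Rightarrow> bool" where
  "mat_invertible n A \<longleftrightarrow> (\<exists>B.
      (\<forall>i<n. \<forall>j<n. (\<Sum>k<n. A i k * B k j) = (if i = j then 1 else 0)) \<and>
      (\<forall>i<n. \<forall>j<n. (\<Sum>k<n. B i k * A k j) = (if i = j then 1 else 0)))"

text \<open>Cohn's characterization: phi makes D a C-algebra (C central), and the
  induced map C<x,y> -> D is fully inverting, so the sub-division-ring of D
  generated by C, x, y is the free skew field on x, y.\<close>
definition free_skew_field :: "(complex \<Rightarrow> 'a::division_ring) \<Rightarrow> 'a \<Rightarrow> 'a \<Rightarrow> bool" where
  "free_skew_field \<phi> x y \<longleftrightarrow>
     (\<forall>a b. \<phi> (a + b) = \<phi> a + \<phi> b) \<and> (\<forall>a b. \<phi> (a * b) = \<phi> a * \<phi> b) \<and> \<phi> 1 = 1 \<and>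
     (\<forall>c d. \<phi> c * d = d * \<phi> c) \<and>
     (\<forall>n M. (\<forall>i<n. \<forall>j<n. fa_poly (M i j)) \<and> fa_full n M \<longrightarrow>
        mat_invertible n (\<lambda>i j. fa_eval \<phi> x y (M i j)))"

end

theory Submission
  imports Defs
begin

text \<open>
  With C = x y x\<inverse> y\<inverse>, neighbouring terms twist-commute, R(k) R(k+1) = R(k+1) C R(k):
  this holds for k = 0 and propagates along the recurrence. Using it, the ratio
  (u(n+2) + C u(n)) u(n+1)\<inverse> can be written as one and the same rational expression G
  both in the pair (R(2n+2), R(2n+3)) and in the pair (R(2n), R(2n+1)). Hence
  G(R(2n), R(2n+1)) is conserved, and u(n+2) = G(R(0), R(1)) u(n+1) - C u(n).
  As G(R(0), R(1)) = y1 + y3, C = y3 y1 - y2 and u(1) = y1 u(0), this linear recurrence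
  has the stated generating function. Freeness enters only to show that no R(k) vanishes:
  otherwise C would be a scalar.
\<close>

unbundle fps_syntax

lemma inverse_mult_cancel_left: "(a::'a::division_ring) \<noteq> 0 \<Longrightarrow> inverse a * (a * b) = b"
  by (simp add: mult.assoc[symmetric])

lemma mult_inverse_cancel_left: "(a::'a::division_ring) \<noteq> 0 \<Longrightarrow> a * (inverse a * b) = b"
  by (simp add: mult.assoc[symmetric])

lemma eq_mult_inverse_right: "(a::'a::division_ring) \<noteq> 0 \<Longrightarrow> b * a = d \<Longrightarrow> b = d * inverse a"
  by (simp add: nonzero_eq_divide_eq flip: divide_inverse)

lemma eq_inverse_mult_left: "(a::'a::division_ring) \<noteq> 0 \<Longrightarrow> a * b = d \<Longrightarrow> b = inverse a * d"
  by (metis inverse_mult_cancel_left)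

lemma twisted_comm_solve:
  fixes a b c :: "'a::division_ring"
  assumes "a \<noteq> 0" "b \<noteq> 0" "a * b = b * c * a"
  shows "c = inverse b * a * b * inverse a"
  using assms by (simp add: mult.assoc inverse_mult_cancel_left mult_inverse_cancel_left)

lemma twisted_comm_step:
  fixes a b c d :: "'a::division_ring"
  assumes ab: "a * b = b * c * a" and d: "d * c * a = 1 + b ^ m" and ca: "c * a \<noteq> 0"
  shows "b * d = d * c * b"
proof -
  have "(b * d) * (c * a) = b * (d * c * a)"
    by (simp add: mult.assoc)
  also have "\<dots> = (d * c * a) * b"
    unfolding d by (simp add: distrib_left distrib_right power_commutes)
  also have "\<dots> = (d * c * b) * (c * a)"
    by (simp add: mult.assoc ab[unfolded mult.assoc])
  finally show ?thesis
    using ca by simp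
qed

text \<open>For (p, q) = (R(2n), R(2n+1)) this is the G of the header.\<close>

definition conserved_quantity :: "'a::division_ring \<Rightarrow> 'a \<Rightarrow> 'a" where
  "conserved_quantity p q = (1 + inverse q) * inverse p * (1 + q) * inverse p + inverse q * p\<^sup>2"

text \<open>In the next lemmas B, q, p, Q, A play the roles of R(2n), ..., R(2n+4).\<close>

lemma conserved_quantity_upper:
  fixes p Q A B q c :: "'a::division_ring"
  assumes p: "p \<noteq> 0" and Q: "Q \<noteq> 0" and pQ: "p * Q = Q * c * p"
    and rel_A: "A * c * p = 1 + Q" and rel_p: "p * c * B = 1 + q" and rel_Q: "Q * c * q = 1 + p ^ 4"
  shows "(A + c * B) * inverse p = conserved_quantity p Q"
proof -
  have c: "c = inverse Q * p * Q * inverse p"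
    using p Q pQ by (rule twisted_comm_solve)
  have "A = (1 + Q) * inverse (c * p)"
    using rel_A p Q c by (auto intro: eq_mult_inverse_right simp: mult.assoc)
  also have "\<dots> = (1 + inverse Q) * inverse p * Q"
    using p Q
    by (simp add: c nonzero_inverse_mult_distrib algebra_simps
        inverse_mult_cancel_left mult_inverse_cancel_left)
  finally have A': "A = (1 + inverse Q) * inverse p * Q" .
  have cB: "c * B = inverse p * (1 + q)"
    using p rel_p by (intro eq_inverse_mult_left) (simp_all add: mult.assoc)
  have "q = inverse (Q * c) * (1 + p ^ 4)"
    using rel_Q p Q c by (intro eq_inverse_mult_left) (auto simp: mult.assoc)
  also have "\<dots> = p * inverse Q * inverse p * (1 + p ^ 4)"
    using p Q by (simp add: c nonzero_inverse_mult_distrib mult.assoc mult_inverse_cancel_left)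
  finally have q': "q = p * inverse Q * inverse p * (1 + p ^ 4)" .
  show ?thesis
    unfolding A' cB q' conserved_quantity_def using p Q
    by (simp add: algebra_simps inverse_mult_cancel_left mult_inverse_cancel_left
        power2_eq_square power4_eq_xxxx)
qed

lemma ratio_in_middle_pair:
  fixes p Q A B q c :: "'a::division_ring"
  assumes q0: "q \<noteq> 0" and p0: "p \<noteq> 0" and qp: "q * p = p * c * q"
    and rel_A: "A * c * p = 1 + Q" and rel_p: "p * c * B = 1 + q" and rel_Q: "Q * c * q = 1 + p ^ 4"
  shows "(A + c * B) * inverse p
    = inverse p * (1 + q) * inverse p * (1 + inverse q) + p\<^sup>2 * inverse q"
proof -
  have c: "c = inverse p * q * p * inverse q"
    using q0 p0 qp by (rule twisted_comm_solve)
  have "Q = (1 + p ^ 4) * inverse (c * q)"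
    using rel_Q q0 p0 c by (auto intro: eq_mult_inverse_right simp: mult.assoc)
  also have "\<dots> = (1 + p ^ 4) * inverse p * inverse q * p"
    using p0 q0 by (simp add: c nonzero_inverse_mult_distrib mult.assoc inverse_mult_cancel_left)
  finally have Q': "Q = (1 + p ^ 4) * inverse p * inverse q * p" .
  have "A = (1 + Q) * inverse (c * p)"
    using rel_A p0 q0 c by (auto intro: eq_mult_inverse_right simp: mult.assoc)
  also have "\<dots> = (1 + Q) * inverse p * q * inverse p * inverse q * p"
    using p0 q0 by (simp add: c nonzero_inverse_mult_distrib mult.assoc)
  finally have A': "A = (1 + Q) * inverse p * q * inverse p * inverse q * p" .
  have cB: "c * B = inverse p * (1 + q)"
    using p0 rel_p by (intro eq_inverse_mult_left) (simp_all add: mult.assoc)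
  show ?thesis
    unfolding A' cB Q' using p0 q0
    by (simp add: algebra_simps inverse_mult_cancel_left mult_inverse_cancel_left
        power2_eq_square power4_eq_xxxx)
qed

lemma conserved_quantity_from_middle_pair:
  fixes p B q c :: "'a::division_ring"
  assumes B0: "B \<noteq> 0" and q0: "q \<noteq> 0" and p0: "p \<noteq> 0"
    and Bq: "B * q = q * c * B" and rel_p: "p * c * B = 1 + q"
  shows "conserved_quantity B q
    = inverse p * (1 + q) * inverse p * (1 + inverse q) + p\<^sup>2 * inverse q"
proof -
  have "p * inverse q * B * q = p * c * B"
    using B0 by (simp add: twisted_comm_solve[OF B0 q0 Bq] mult.assoc)
  then have "p * inverse q * B = (1 + q) * inverse q"
    using q0 rel_p by (intro eq_mult_inverse_right) simp_all
  then have pqB: "p * inverse q * B = 1 + inverse q"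
    using q0 by (simp add: algebra_simps)
  then have piq: "p * inverse q = (1 + inverse q) * inverse B"
    by (rule eq_mult_inverse_right[OF B0])
  have ip: "inverse p * (1 + inverse q) = inverse q * B"
    using p0 pqB by (intro eq_inverse_mult_left [symmetric]) (simp_all add: mult.assoc)
  have "inverse p * (1 + q) * inverse p * (1 + inverse q) = inverse p * ((1 + q) * inverse q) * B"
    by (simp add: ip mult.assoc)
  also have "(1 + q) * inverse q = 1 + inverse q"
    using q0 by (simp add: algebra_simps)
  also have "inverse p * (1 + inverse q) * B = inverse q * B\<^sup>2"
    by (simp add: ip power2_eq_square mult.assoc)
  finally have first_term: "inverse p * (1 + q) * inverse p * (1 + inverse q) = inverse q * B\<^sup>2" .
  have "p\<^sup>2 * inverse q = p * inverse q * (1 + q) * inverse B"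
  proof -
    have "p * inverse q * (1 + q) = p * (1 + inverse q)"
      using q0 by (simp add: algebra_simps)
    then show ?thesis
      by (simp add: power2_eq_square piq mult.assoc)
  qed
  also have "\<dots> = (1 + inverse q) * inverse B * (1 + q) * inverse B"
    by (simp add: piq)
  finally show ?thesis
    unfolding first_term conserved_quantity_def by (simp add: add.commute)
qed

lemma conserved_quantity_lower:
  fixes p Q A B q c :: "'a::division_ring"
  assumes "B \<noteq> 0" "q \<noteq> 0" "p \<noteq> 0" "B * q = q * c * B" "q * p = p * c * q"
    and "A * c * p = 1 + Q" "p * c * B = 1 + q" "Q * c * q = 1 + p ^ 4"
  shows "(A + c * B) * inverse p = conserved_quantity B q"
  using ratio_in_middle_pair[of q p c A Q B] conserved_quantity_from_middle_pair[of B q p c] assms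
  by simp

lemma twisted_recurrence_nonzero:
  fixes R :: "nat \<Rightarrow> 'a::division_ring"
  assumes rec_even: "\<And>n. R (2*n + 2) * c * R (2*n) = 1 + R (2*n + 1)"
    and rec_odd: "\<And>n. R (2*n + 3) * c * R (2*n + 1) = 1 + R (2*n + 2) ^ 4"
    and "R 0 \<noteq> 0" "R 1 \<noteq> 0" and "c \<noteq> 1"
    and not_between: "\<And>s t. s ^ 4 = -1 \<Longrightarrow> t ^ 4 = -1 \<Longrightarrow> t * c * s \<noteq> 1"
  shows "R k \<noteq> 0"
proof -
  have minus_one: "b = -1" if "1 + b = 0" for b :: 'a
    using that by (simp add: eq_neg_iff_add_eq_0 add.commute)
  have rec_even': "R (2*n + 4) * c * R (2*n + 2) = 1 + R (2*n + 3)" for n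
    using rec_even[of "n + 1"] by (simp add: numeral_eq_Suc)
  have rec_odd': "R (2*n + 5) * c * R (2*n + 3) = 1 + R (2*n + 4) ^ 4" for n
    using rec_odd[of "n + 1"] by (simp add: numeral_eq_Suc)
  have even: "R (2*m + 2) \<noteq> 0" for m
  proof
    assume "R (2*m + 2) = 0"
    then have "R (2*m + 3) = -1" "R (2*m + 1) = -1" "R (2*m + 3) * c * R (2*m + 1) = 1"
      using rec_even'[of m] rec_even[of m] rec_odd[of m] by (auto intro: minus_one)
    with \<open>c \<noteq> 1\<close> show False by simp
  qed
  have odd: "R (2*m + 3) \<noteq> 0" for m
  proof
    assume "R (2*m + 3) = 0"
    then have "R (2*m + 2) ^ 4 = -1" "R (2*m + 4) ^ 4 = -1" "R (2*m + 4) * c * R (2*m + 2) = 1"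
      using rec_odd[of m] rec_odd'[of m] rec_even'[of m] by (auto intro: minus_one)
    with not_between show False by blast
  qed
  have "k = 0 \<or> k = 1 \<or> (\<exists>m. k = 2*m + 2 \<or> k = 2*m + 3)"
    by presburger
  then show ?thesis
    using even odd \<open>R 0 \<noteq> 0\<close> \<open>R 1 \<noteq> 0\<close> by blast
qed

lemma fps_second_order_recurrence:
  fixes u :: "nat \<Rightarrow> 'a::ring_1"
  assumes rec: "\<And>n. u (n + 2) = a * u (n + 1) - b * u n"
  shows "(1 - fps_X * fps_const a + fps_X\<^sup>2 * fps_const b) * Abs_fps u
    = fps_const (u 0) + fps_X * fps_const (u 1 - a * u 0)"
proof (rule fps_ext)
  fix n :: nat
  consider "n = 0" | "n = 1" | k where "n = k + 2"
    by (metis One_nat_def add_2_eq_Suc' not0_implies_Suc)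
  then show "((1 - fps_X * fps_const a + fps_X\<^sup>2 * fps_const b) * Abs_fps u) $ n
    = (fps_const (u 0) + fps_X * fps_const (u 1 - a * u 0)) $ n"
    by cases (simp_all add: algebra_simps fps_X_power_mult_nth fps_const_mult_left rec[simplified])
qed

lemma fps_const_mult_fps_X_left_commute:
  fixes c :: "'a::ring_1"
  shows "fps_const c * (fps_X * f) = fps_X * (fps_const c * f)"
  by (simp only: mult.assoc[symmetric] fps_mult_fps_X_commute[of "fps_const c"])

lemma fps_continued_fraction_recurrence:
  fixes u :: "nat \<Rightarrow> 'a::division_ring"
  assumes rec: "\<And>n. u (n + 2) = (y1 + y3) * u (n + 1) - (y3 * y1 - y2) * u n"
    and u1: "u 1 = y1 * u 0"
  shows "Abs_fps u = inverse (1 - fps_X * fps_const y1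
     - fps_X\<^sup>2 * inverse (1 - fps_X * fps_const y3) * fps_const y2) * fps_const (u 0)"
proof -
  define E :: "'a fps" where "E = 1 - fps_X * fps_const y3"
  define D where "D = 1 - fps_X * fps_const y1 - fps_X\<^sup>2 * inverse E * fps_const y2"
  have E_inv: "E * inverse E = 1" "inverse E * E = 1"
    by (simp_all add: E_def inverse_mult_eq_1 inverse_mult_eq_1')
  have "E * (fps_X\<^sup>2 * inverse E * fps_const y2) = fps_X\<^sup>2 * (E * inverse E) * fps_const y2"
    by (simp only: mult.assoc fps_mult_fps_X_power_commute)
  then have "E * D = E - E * (fps_X * fps_const y1) - fps_X\<^sup>2 * fps_const y2"
    by (simp add: D_def E_inv right_diff_distrib)
  also have "\<dots> = 1 - fps_X * fps_const (y1 + y3) + fps_X\<^sup>2 * fps_const (y3 * y1 - y2)"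
    unfolding E_def
    by (simp add: algebra_simps power2_eq_square fps_const_mult_fps_X_left_commute
        flip: fps_const_add fps_const_sub fps_const_neg)
  finally have ED: "E * D = 1 - fps_X * fps_const (y1 + y3) + fps_X\<^sup>2 * fps_const (y3 * y1 - y2)" .
  have "E * (D * Abs_fps u) = fps_const (u 0) + fps_X * fps_const (u 1 - (y1 + y3) * u 0)"
    by (simp only: mult.assoc[symmetric] ED fps_second_order_recurrence[OF rec])
  also have "u 1 - (y1 + y3) * u 0 = - (y3 * u 0)"
    using u1 by (simp add: algebra_simps)
  also have "fps_const (u 0) + fps_X * fps_const (- (y3 * u 0)) = E * fps_const (u 0)"
    by (simp add: E_def left_diff_distrib mult.assoc flip: fps_const_neg)
  finally have "E * (D * Abs_fps u) = E * fps_const (u 0)" .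
  then have "D * Abs_fps u = fps_const (u 0)"
    by (metis E_inv(2) mult.assoc mult_1_left)
  moreover have "inverse D * D = 1"
    by (simp add: D_def inverse_mult_eq_1)
  ultimately have "Abs_fps u = inverse D * fps_const (u 0)"
    by (metis mult.assoc mult_1_left)
  then show ?thesis
    unfolding D_def E_def .
qed

locale twisted_recurrence =
  fixes R :: "nat \<Rightarrow> 'a::division_ring" and c :: 'a
  assumes rec_even: "R (2*n + 2) * c * R (2*n) = 1 + R (2*n + 1)"
    and rec_odd: "R (2*n + 3) * c * R (2*n + 1) = 1 + R (2*n + 2) ^ 4"
    and twisted_comm_base: "R 0 * R 1 = R 1 * c * R 0"
    and nonzero: "R k \<noteq> 0"
begin

lemma c_nonzero: "c \<noteq> 0"
  using twisted_comm_base nonzero[of 0] nonzero[of 1] by auto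

lemma rec_power: "\<exists>m. R (k + 2) * c * R k = 1 + R (k + 1) ^ m"
proof -
  obtain n where "k = 2*n \<or> k = 2*n + 1"
    by (metis dvd_mult_div_cancel odd_two_times_div_two_succ)
  then show ?thesis
  proof
    assume "k = 2*n"
    then show ?thesis
      using rec_even[of n] by (intro exI[of _ 1]) simp
  next
    assume "k = 2*n + 1"
    then show ?thesis
      using rec_odd[of n] by (intro exI[of _ 4]) (simp add: numeral_eq_Suc)
  qed
qed

lemma twisted_comm: "R k * R (k + 1) = R (k + 1) * c * R k"
proof (induction k)
  case 0
  show ?case using twisted_comm_base by simp
next
  case (Suc k)
  obtain m where "R (k + 2) * c * R k = 1 + R (k + 1) ^ m"
    using rec_power by blast
  from twisted_comm_step[OF Suc.IH this]
  have "R (k + 1) * R (k + 2) = R (k + 2) * c * R (k + 1)"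
    using c_nonzero nonzero by simp
  then show ?case
    by simp
qed

lemma quotient_eq_conserved_quantity:
  "(R (2*n + 4) + c * R (2*n)) * inverse (R (2*n + 2))
     = conserved_quantity (R (2*n + 2)) (R (2*n + 3))"
  "(R (2*n + 4) + c * R (2*n)) * inverse (R (2*n + 2))
     = conserved_quantity (R (2*n)) (R (2*n + 1))"
proof -
  have comm: "R (2*n) * R (2*n + 1) = R (2*n + 1) * c * R (2*n)"
    "R (2*n + 1) * R (2*n + 2) = R (2*n + 2) * c * R (2*n + 1)"
    "R (2*n + 2) * R (2*n + 3) = R (2*n + 3) * c * R (2*n + 2)"
    using twisted_comm[of "2*n"] twisted_comm[of "2*n + 1"] twisted_comm[of "2*n + 2"]
    by (simp_all add: numeral_eq_Suc)
  have rec: "R (2*n + 4) * c * R (2*n + 2) = 1 + R (2*n + 3)"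
    using rec_even[of "n + 1"] by (simp add: numeral_eq_Suc)
  show "(R (2*n + 4) + c * R (2*n)) * inverse (R (2*n + 2))
      = conserved_quantity (R (2*n + 2)) (R (2*n + 3))"
    by (rule conserved_quantity_upper) (use comm rec rec_even rec_odd nonzero in auto)
  show "(R (2*n + 4) + c * R (2*n)) * inverse (R (2*n + 2))
      = conserved_quantity (R (2*n)) (R (2*n + 1))"
    by (rule conserved_quantity_lower) (use comm rec rec_even rec_odd nonzero in auto)
qed

lemma conserved_quantity_invariant:
  "conserved_quantity (R (2*n)) (R (2*n + 1)) = conserved_quantity (R 0) (R 1)"
proof (induction n)
  case (Suc n)
  then show ?case
    using quotient_eq_conserved_quantity[of n] by (simp add: numeral_eq_Suc)
qed simp

lemma linear_recurrence:
  "R (2*n + 4) = conserved_quantity (R 0) (R 1) * R (2*n + 2) - c * R (2*n)"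
proof -
  have "(R (2*n + 4) + c * R (2*n)) * inverse (R (2*n + 2)) = conserved_quantity (R 0) (R 1)"
    using quotient_eq_conserved_quantity(2) conserved_quantity_invariant by simp
  then have "R (2*n + 4) + c * R (2*n) = conserved_quantity (R 0) (R 1) * R (2*n + 2)"
    using nonzero[of "2*n + 2"] by (simp add: nonzero_divide_eq_eq flip: divide_inverse)
  then show ?thesis
    by (simp add: algebra_simps)
qed

lemma generating_function:
  assumes "conserved_quantity (R 0) (R 1) = y1 + y3" "c = y3 * y1 - y2" "R 2 = y1 * R 0"
  shows "Abs_fps (\<lambda>n. R (2*n)) = inverse (1 - fps_X * fps_const y1
     - fps_X\<^sup>2 * inverse (1 - fps_X * fps_const y3) * fps_const y2) * fps_const (R 0)"
  using fps_continued_fraction_recurrence[of "\<lambda>n. R (2*n)" y1 y3 y2] linear_recurrence assms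
  by (simp add: numeral_eq_Suc)

end

lemma
  assumes "free_skew_field \<phi> x y"
  shows free_skew_field_add: "\<phi> (a + b) = \<phi> a + \<phi> b"
    and free_skew_field_mult: "\<phi> (a * b) = \<phi> a * \<phi> b"
    and free_skew_field_one: "\<phi> 1 = 1"
    and free_skew_field_central: "\<phi> a * d = d * \<phi> a"
  using assms unfolding free_skew_field_def by blast+

lemma free_skew_field_zero: "free_skew_field \<phi> x y \<Longrightarrow> \<phi> 0 = 0"
  using free_skew_field_add[of \<phi> x y 0 0] by simp

lemma free_skew_field_minus: "free_skew_field \<phi> x y \<Longrightarrow> \<phi> (- a) = - \<phi> a"
  using free_skew_field_add[of \<phi> x y a "- a"] free_skew_field_zero[of \<phi> x y]
  by (simp add: eq_neg_iff_add_eq_0 add.commute)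

lemma free_skew_field_inverse: "free_skew_field \<phi> x y \<Longrightarrow> \<phi> (inverse a) = inverse (\<phi> a)"
proof (cases "a = 0")
  case False
  assume fsf: "free_skew_field \<phi> x y"
  have "\<phi> a * \<phi> (inverse a) = 1"
    using False free_skew_field_mult[OF fsf, of a "inverse a"] free_skew_field_one[OF fsf] by simp
  then show ?thesis
    by (simp add: inverse_unique)
qed (simp add: free_skew_field_zero)

lemma free_skew_field_commutator_not_scalar:
  assumes fsf: "free_skew_field \<phi> x y"
  shows "x * y \<noteq> \<phi> z * (y * x)"
proof
  assume eq: "x * y = \<phi> z * (y * x)"
  \<comment> \<open>x y - z y x is a nonzero polynomial, i.e. a full 1 \<times> 1 matrix, so it evaluates to a unit.\<close>
  define p :: fa where "p = (\<lambda>w. if w = [False, True] then 1 else if w = [True, False] then - z else 0)"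
  have support: "{w. p w \<noteq> 0} = (if z = 0 then {[False, True]} else {[False, True], [True, False]})"
    by (auto simp: p_def)
  have "fa_full 1 (\<lambda>_ _. p)"
    unfolding fa_full_def
  proof (intro notI, elim exE conjE)
    fix r :: nat and P Q :: "nat \<Rightarrow> nat \<Rightarrow> fa"
    assume "r < 1" and "\<forall>i<1. \<forall>j<1. \<forall>w. p w = (\<Sum>k<r. fa_mult (P i k) (Q k j) w)"
    then have "p [False, True] = 0"
      by simp
    then show False
      by (simp add: p_def)
  qed
  then have "mat_invertible 1 (\<lambda>_ _. fa_eval \<phi> x y p)"
    using fsf support unfolding free_skew_field_def fa_poly_def by auto
  then obtain b where "fa_eval \<phi> x y p * b = 1"
    unfolding mat_invertible_def by auto
  moreover have "fa_eval \<phi> x y p = x * y - \<phi> z * (y * x)"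
    using free_skew_field_one[OF fsf] free_skew_field_zero[OF fsf] free_skew_field_minus[OF fsf]
    unfolding fa_eval_def support by (cases "z = 0") (simp_all add: p_def word_eval_def)
  ultimately show False
    using eq by simp
qed

lemma free_skew_field_nonzero:
  assumes "free_skew_field \<phi> x y"
  shows "x \<noteq> 0" "y \<noteq> 0"
  using free_skew_field_commutator_not_scalar[OF assms, of 1] free_skew_field_one[OF assms] by auto

lemma free_skew_field_commutator_ne_scalar:
  assumes fsf: "free_skew_field \<phi> x y"
  shows "x * y * inverse x * inverse y \<noteq> \<phi> z"
proof
  assume "x * y * inverse x * inverse y = \<phi> z"
  moreover have "x * y * inverse x * inverse y * (y * x) = x * y"
    using free_skew_field_nonzero[OF fsf] by (simp add: mult.assoc inverse_mult_cancel_left)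
  ultimately have "x * y = \<phi> z * (y * x)"
    by simp
  with free_skew_field_commutator_not_scalar[OF fsf] show False by blast
qed

lemma free_skew_field_square_root:
  assumes fsf: "free_skew_field \<phi> x y" and w: "w * w = \<phi> a"
  shows "\<exists>s. w = \<phi> s"
proof -
  define s where "s = csqrt a"
  have "(w - \<phi> s) * (w + \<phi> s) = w * w - \<phi> s * \<phi> s"
    using free_skew_field_central[OF fsf, of s w] by (simp add: algebra_simps)
  also have "\<dots> = 0"
    using w free_skew_field_mult[OF fsf, of s s] by (simp add: s_def flip: power2_eq_square)
  finally have "w = \<phi> s \<or> w = - \<phi> s"
    by (simp add: eq_neg_iff_add_eq_0)
  then show ?thesis
    using free_skew_field_minus[OF fsf, of s] by metis
qed

lemma free_skew_field_fourth_root_of_minus_one: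
  assumes fsf: "free_skew_field \<phi> x y" and w: "w ^ 4 = - 1"
  shows "\<exists>s. w = \<phi> s"
proof -
  have "(w * w) * (w * w) = \<phi> (- 1)"
    using w free_skew_field_minus[OF fsf] free_skew_field_one[OF fsf]
    by (simp add: power4_eq_xxxx mult.assoc)
  then obtain a where "w * w = \<phi> a"
    using free_skew_field_square_root[OF fsf] by blast
  then show ?thesis
    using free_skew_field_square_root[OF fsf] by blast
qed

lemma free_skew_field_commutator_between_fourth_roots:
  assumes fsf: "free_skew_field \<phi> x y" and "s ^ 4 = - 1" "t ^ 4 = - 1"
  shows "t * (x * y * inverse x * inverse y) * s \<noteq> 1"
proof
  let ?c = "x * y * inverse x * inverse y"
  assume eq: "t * ?c * s = 1"
  obtain a b where "s = \<phi> a" "t = \<phi> b"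
    using assms free_skew_field_fourth_root_of_minus_one by metis
  then have "t * ?c * s = ?c * \<phi> b * \<phi> a"
    by (simp add: free_skew_field_central[OF fsf, of b ?c])
  also have "\<dots> = ?c * \<phi> (b * a)"
    by (simp add: mult.assoc free_skew_field_mult[OF fsf])
  finally have "?c * \<phi> (b * a) = 1"
    using eq by simp
  then have "?c = \<phi> (inverse (b * a))"
    using free_skew_field_inverse[OF fsf] by (metis inverse_inverse_eq inverse_unique)
  with free_skew_field_commutator_ne_scalar[OF fsf] show False
    by blast
qed

lemma free_skew_field_twisted_recurrence:
  fixes R :: "int \<Rightarrow> 'a::division_ring"
  assumes fsf: "free_skew_field \<phi> x y"
    and rec_even: "\<forall>n. R (2*n) * (x * y * inverse x * inverse y) * R (2*n - 2) = 1 + R (2*n - 1)"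
    and rec_odd: "\<forall>n. R (2*n + 1) * (x * y * inverse x * inverse y) * R (2*n - 1) = 1 + R (2*n) ^ 4"
    and R0: "R 0 = y * x * inverse y" and R1: "R 1 = y"
  shows "twisted_recurrence (\<lambda>k. R (int k)) (x * y * inverse x * inverse y)"
proof -
  let ?c = "x * y * inverse x * inverse y"
  have x: "x \<noteq> 0" and y: "y \<noteq> 0"
    using free_skew_field_nonzero[OF fsf] by auto
  have even: "R (int (2*n + 2)) * ?c * R (int (2*n)) = 1 + R (int (2*n + 1))" for n
    using rec_even[rule_format, of "int n + 1"] by (simp add: algebra_simps)
  have odd: "R (int (2*n + 3)) * ?c * R (int (2*n + 1)) = 1 + R (int (2*n + 2)) ^ 4" for n
    using rec_odd[rule_format, of "int n + 1"] by (simp add: algebra_simps)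
  show ?thesis
  proof
    show "R (int 0) * R (int 1) = R (int 1) * ?c * R (int 0)"
      using x y by (simp add: R0 R1 mult.assoc inverse_mult_cancel_left)
    show "R (int k) \<noteq> 0" for k
      by (rule twisted_recurrence_nonzero[of "\<lambda>k. R (int k)", OF even odd])
        (use x y R0 R1 free_skew_field_commutator_ne_scalar[OF fsf, of 1] free_skew_field_one[OF fsf]
             free_skew_field_commutator_between_fourth_roots[OF fsf] in auto)
  qed (fact even odd)+
qed

lemma conserved_quantity_initial:
  fixes x y :: "'a::division_ring"
  assumes "x \<noteq> 0" "y \<noteq> 0"
  shows "conserved_quantity (y * x * inverse y) y
    = (1 + y) * inverse x * y * inverse x * inverse y
      + (x ^ 3 + (1 + y) * inverse x) * inverse x * inverse y"
proof -
  have "inverse (y * x * inverse y) = y * inverse x * inverse y"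
    using assms by (simp add: nonzero_inverse_mult_distrib mult.assoc)
  then show ?thesis
    unfolding conserved_quantity_def using assms
    by (simp add: algebra_simps inverse_mult_cancel_left mult_inverse_cancel_left
        power2_eq_square power3_eq_cube)
qed

lemma commutator_eq_y3_y1_minus_y2:
  fixes x y :: "'a::division_ring"
  assumes "x \<noteq> 0" "y \<noteq> 0"
  shows "x * y * inverse x * inverse y
    = (x ^ 3 + (1 + y) * inverse x) * inverse x * inverse y
        * ((1 + y) * inverse x * y * inverse x * inverse y)
      - (x ^ 2 + (1 + y) * inverse x ^ 2 * (1 + y)) * inverse y * inverse x * y * inverse x * inverse y"
  using assms
  by (simp add: algebra_simps inverse_mult_cancel_left mult_inverse_cancel_left
      power2_eq_square power3_eq_cube)

lemma first_relation_iff: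
  fixes x y :: "'a::division_ring"
  assumes x: "x \<noteq> 0" and y: "y \<noteq> 0"
  shows "r * (x * y * inverse x * inverse y) * (y * x * inverse y) = 1 + y
    \<longleftrightarrow> r = (1 + y) * inverse x * y * inverse x * inverse y * (y * x * inverse y)"
proof -
  have lhs: "r * (x * y * inverse x * inverse y) * (y * x * inverse y) = r * x"
    using assms by (simp add: mult.assoc inverse_mult_cancel_left)
  have rhs: "(1 + y) * inverse x * y * inverse x * inverse y * (y * x * inverse y)
      = (1 + y) * inverse x"
    using assms by (simp add: mult.assoc inverse_mult_cancel_left)
  show ?thesis
    unfolding lhs rhs using x by (auto intro: eq_mult_inverse_right simp: mult.assoc)
qed

theorem theorem4p3:
  fixes \<phi> :: "complex \<Rightarrow> 'a::division_ring" and x y :: 'a and R :: "int \<Rightarrow> 'a"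
  assumes "free_skew_field \<phi> x y"
    and "\<forall>n. R (2*n) * (x * y * inverse x * inverse y) * R (2*n - 2) = 1 + R (2*n - 1)"
    and "\<forall>n. R (2*n + 1) * (x * y * inverse x * inverse y) * R (2*n - 1) = 1 + R (2*n) ^ 4"
    and "R 0 = y * x * inverse y"
    and "R 1 = y"
  shows "Abs_fps (\<lambda>n. R (2 * int n)) =
    inverse (1 - fps_X * fps_const ((1 + y) * inverse x * y * inverse x * inverse y)
      - fps_X ^ 2 * inverse (1 - fps_X * fps_const ((x ^ 3 + (1 + y) * inverse x) * inverse x * inverse y))
          * fps_const ((x ^ 2 + (1 + y) * inverse x ^ 2 * (1 + y)) * inverse y * inverse x * y * inverse x * inverse y))
    * fps_const (R 0)"
proof -
  let ?c = "x * y * inverse x * inverse y"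
  have x: "x \<noteq> 0" and y: "y \<noteq> 0"
    using free_skew_field_nonzero[OF assms(1)] by auto
  interpret twisted_recurrence "\<lambda>k. R (int k)" ?c
    using assms by (rule free_skew_field_twisted_recurrence)
  have "R 2 = (1 + y) * inverse x * y * inverse x * inverse y * R 0"
    using rec_even[of 0] by (simp add: assms(4,5) first_relation_iff[OF x y])
  then show ?thesis
    using generating_function assms(4,5) x y
    by (simp add: conserved_quantity_initial commutator_eq_y3_y1_minus_y2)
qed

end
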